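(* Let $G$ be an abelian group, $n$ an integer, $X$ a metric compactum, $A\subset X$ a carrier of a nonzero element $\alpha\in\check{H}^n(X;G)$, and $B\subset X$ closed. Let $j_A:A\hookrightarrow A\cup B$ and $j_B:B\hookrightarrow A\cup B$ be the inclusions, and $j_A^*,j_B^*$ the induced homomorphisms on $\check{H}^n(\,\cdot\,;G)$. Then $A\subset B$ if and only if $\ker(j_B^* )\subset\ker(j_A^* )$.
   Context: $\check{H}^k(\,\cdot\,;G)$ is reduced Čech cohomology. For closed $A\subset X$, $i_A:A\hookrightarrow X$ is the inclusion. A closed nonempty set $A\subset X$ is a (cohomological) carrier of a nonzero $\alpha\in\check{H}^n(X;G)$ if $i_A^*(\alpha)\neq0$ and $i_B^*(\alpha)=0$ for every proper closed subset $B\subsetneq A$. *)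

theory Defs
  imports "HOL-Analysis.Analysis"
begin

text \<open>Reduced Cech cohomology of compact subsets Y of a metric space, with coefficients
in an abelian group 'g, built from finite covers of Y by (ambient) open sets.  Ordered n-simplices of the
nerve (relative to Y) are lists of n+1 cover members whose common intersection meets Y.
The empty list is a (-1)-simplex iff Y is nonempty, so the usual coboundary formula
yields the augmented cochain complex, whose cohomology is reduced cohomology.\<close>

definition cech_simplices :: "'a set \<Rightarrow> 'a set set \<Rightarrow> nat \<Rightarrow> 'a set list set" where
  "cech_simplices Y U k = {s. length s = k \<and> set s \<subseteq> U \<and> Y \<inter> \<Inter>(set s) \<noteq> {}}"

definition cech_delete :: "nat \<Rightarrow> 'b list \<Rightarrow> 'b list" where
  "cech_delete i s = take i s @ drop (Suc i) s"

definition cech_cobdry :: "('a set list \<Rightarrow> 'g::ab_group_add) \<Rightarrow> 'a set list \<Rightarrow> 'g" where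
  "cech_cobdry c s =
     (\<Sum>i<length s. if even i then c (cech_delete i s) else - c (cech_delete i s))"

definition cech_open_cover :: "'a::topological_space set \<Rightarrow> 'a set set \<Rightarrow> bool" where
  "cech_open_cover Y U \<longleftrightarrow> finite U \<and> (\<forall>V\<in>U. open V) \<and> Y \<subseteq> \<Union>U"

definition cech_cocycle :: "int \<Rightarrow> 'a set \<Rightarrow> 'a set set \<Rightarrow> ('a set list \<Rightarrow> 'g::ab_group_add) \<Rightarrow> bool" where
  "cech_cocycle n Y U z \<longleftrightarrow>
     n < -1 \<or> (\<forall>s\<in>cech_simplices Y U (nat (n + 2)). cech_cobdry z s = 0)"

definition cech_coboundary :: "int \<Rightarrow> 'a set \<Rightarrow> 'a set set \<Rightarrow> ('a set list \<Rightarrow> 'g::ab_group_add) \<Rightarrow> bool" where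
  "cech_coboundary n Y U z \<longleftrightarrow>
     n < -1 \<or> (\<exists>b. \<forall>s\<in>cech_simplices Y U (nat (n + 1)). z s = cech_cobdry b s)"

definition cech_refines_via :: "'a set set \<Rightarrow> 'a set set \<Rightarrow> ('a set \<Rightarrow> 'a set) \<Rightarrow> bool" where
  "cech_refines_via V U p \<longleftrightarrow> (\<forall>W\<in>V. p W \<in> U \<and> W \<subseteq> p W)"

type_synonym ('a, 'g) cech_rep = "'a set set \<times> ('a set list \<Rightarrow> 'g)"

definition cech_is_rep :: "int \<Rightarrow> 'a::topological_space set \<Rightarrow> ('a, 'g::ab_group_add) cech_rep \<Rightarrow> bool" where
  "cech_is_rep n Y r \<longleftrightarrow> cech_open_cover Y (fst r) \<and> cech_cocycle n Y (fst r) (snd r)"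

text \<open>two representing cocycles define the same element of the direct limit\<close>
definition cech_rel :: "int \<Rightarrow> 'a::topological_space set \<Rightarrow> ('a, 'g::ab_group_add) cech_rep \<Rightarrow> ('a, 'g) cech_rep \<Rightarrow> bool" where
  "cech_rel n Y r r' \<longleftrightarrow>
     (\<exists>W p q. cech_open_cover Y W \<and> cech_refines_via W (fst r) p \<and> cech_refines_via W (fst r') q \<and>
        cech_coboundary n Y W (\<lambda>s. snd r (map p s) - snd r' (map q s)))"

definition cech_class :: "int \<Rightarrow> 'a::topological_space set \<Rightarrow> ('a, 'g::ab_group_add) cech_rep \<Rightarrow> ('a, 'g) cech_rep set" where
  "cech_class n Y r = {r'. cech_is_rep n Y r' \<and> cech_rel n Y r r'}"

definition cech_H :: "int \<Rightarrow> 'a::topological_space set \<Rightarrow> ('a, 'g::ab_group_add) cech_rep set set" where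
  "cech_H n Y = cech_class n Y ` {r. cech_is_rep n Y r}"

definition cech_zero :: "int \<Rightarrow> 'a::topological_space set \<Rightarrow> ('a, 'g::ab_group_add) cech_rep set" where
  "cech_zero n Y = cech_class n Y ({UNIV}, \<lambda>_. 0)"

definition cech_incl :: "int \<Rightarrow> 'a::topological_space set \<Rightarrow> 'a set \<Rightarrow> ('a, 'g::ab_group_add) cech_rep set \<Rightarrow> ('a, 'g) cech_rep set" where
  "cech_incl n Y' Y c = cech_class n Y' (SOME r. r \<in> c)"

definition cech_kernel :: "int \<Rightarrow> 'a::topological_space set \<Rightarrow> 'a set \<Rightarrow> ('a, 'g::ab_group_add) cech_rep set set" where
  "cech_kernel n Y' Y = {c \<in> cech_H n Y. cech_incl n Y' Y c = cech_zero n Y'}"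

definition cech_carrier :: "int \<Rightarrow> 'a::topological_space set \<Rightarrow> 'a set \<Rightarrow> ('a, 'g::ab_group_add) cech_rep set \<Rightarrow> bool" where
  "cech_carrier n X A \<alpha> \<longleftrightarrow> closed A \<and> A \<subseteq> X \<and> A \<noteq> {} \<and>
     cech_incl n A X \<alpha> \<noteq> cech_zero n A \<and>
     (\<forall>B. closed B \<and> B \<subset> A \<longrightarrow> cech_incl n B X \<alpha> = cech_zero n B)"

end

theory Submission
  imports Defs
begin

text \<open>
  If A \<subseteq> B then A \<union> B = B and any class of B that dies on B dies on the smaller
  set A, so the kernel inclusion is monotonicity of restriction.  Conversely, suppose the kernel
  inclusion holds but A \<not>\<subseteq> B.  Then C = A \<inter> B is a proper closed subset of the carrier A, so a
  representing cocycle z of \<alpha> becomes a coboundary on C.  Using compactness we shrink the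
  covers near C so that the bounding cochain can be subtracted from z near B; extending the
  result by zero across B - A gives a cocycle on A \<union> B which vanishes on B but agrees with z on A.
  Its class lies in the kernel of restriction to B, hence to A, so \<alpha> would vanish on A,
  contradicting that A is a carrier.
\<close>

section \<open>The coboundary operator\<close>

definition sg :: "nat \<Rightarrow> 'g::ab_group_add \<Rightarrow> 'g" where
  "sg i x = (if even i then x else - x)"

lemma cobdry_sg: "cech_cobdry c s = (\<Sum>i<length s. sg i (c (cech_delete i s)))"
  by (simp add: cech_cobdry_def sg_def)

lemma sg_sum: "sg i (sum f A) = sum (\<lambda>x. sg i (f x)) A"
  by (simp add: sg_def sum_negf)

lemma sg_sg: "sg i (sg j x) = sg (i + j) x"
  by (simp add: sg_def)

lemma sg_Suc: "sg (Suc i) x = - sg i x"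
  by (simp add: sg_def)

lemma sg_add: "sg i (x + y) = sg i x + sg i y"
  and sg_minus: "sg i (- x) = - sg i x"
  and sg_diff: "sg i (x - y) = sg i x - sg i y"
  by (auto simp: sg_def)

lemma length_delete [simp]: "i < length s \<Longrightarrow> length (cech_delete i s) = length s - 1"
  by (simp add: cech_delete_def)

lemma nth_delete: "i < length s \<Longrightarrow> k < length s - 1 \<Longrightarrow>
    cech_delete i s ! k = (if k < i then s ! k else s ! Suc k)"
  by (auto simp: cech_delete_def nth_append min_def)

lemma delete_map: "cech_delete i (map f s) = map f (cech_delete i s)"
  by (simp add: cech_delete_def take_map drop_map)

lemma set_delete: "set (cech_delete i s) \<subseteq> set s"
  unfolding cech_delete_def using set_take_subset set_drop_subset by fastforce

lemma set_delete_insert: "i < length t \<Longrightarrow> set t = insert (t ! i) (set (cech_delete i t))"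
proof -
  assume i: "i < length t"
  have "set t = set (take i t @ t ! i # drop (Suc i) t)" using id_take_nth_drop[OF i] by simp
  then show ?thesis by (auto simp: cech_delete_def)
qed

lemma delete_delete: "a < c \<Longrightarrow> c < length s \<Longrightarrow>
    cech_delete a (cech_delete c s) = cech_delete (c - 1) (cech_delete a s)"
  by (rule nth_equalityI) (auto simp: nth_delete)

lemma cobdry_map: "cech_cobdry c (map f s) = cech_cobdry (\<lambda>t. c (map f t)) s"
  by (simp add: cech_cobdry_def delete_map cong: if_cong)

lemma cobdry_diff: "cech_cobdry (\<lambda>t. a t - b t) s = cech_cobdry a s - cech_cobdry b s"
  by (simp add: cobdry_sg sg_diff sum_subtractf)

lemma cobdry_add: "cech_cobdry (\<lambda>t. a t + b t) s = cech_cobdry a s + cech_cobdry b s"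
  by (simp add: cobdry_sg sg_add sum.distrib)

lemma cobdry_uminus: "cech_cobdry (\<lambda>t. - a t) s = - cech_cobdry a s"
  by (simp add: cobdry_sg sg_minus sum_negf)

lemma cobdry_zero: "cech_cobdry (\<lambda>t. 0) s = 0"
  by (simp add: cech_cobdry_def cong: if_cong)

lemma cobdry_cong: "(\<And>i. i < length t \<Longrightarrow> c (cech_delete i t) = c' (cech_delete i t)) \<Longrightarrow>
    cech_cobdry c t = cech_cobdry c' t"
  unfolding cech_cobdry_def by (rule sum.cong) auto

text \<open>\<delta>\<delta> = 0: the terms of the double sum cancel in pairs via the simplicial identity.\<close>
lemma cobdry_cobdry: "cech_cobdry (cech_cobdry b) s = 0"
proof -
  let ?L = "length s"
  define F where "F = (\<lambda>(i,j). sg (i + j) (b (cech_delete i (cech_delete j s))))"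
  define T1 where "T1 = {(i,j). j < ?L \<and> i < ?L - 1 \<and> i < j}"
  define T2 where "T2 = {(i,j). j < ?L \<and> i < ?L - 1 \<and> j \<le> i}"
  have "cech_cobdry (cech_cobdry b) s = (\<Sum>j<?L. \<Sum>i<?L - 1. F (i,j))"
    by (simp add: cobdry_sg sg_sum sg_sg F_def add.commute)
  also have "\<dots> = (\<Sum>i<?L - 1. \<Sum>j<?L. F (i,j))"
    by (rule sum.swap)
  also have "\<dots> = sum F ({..<?L - 1} \<times> {..<?L})"
    by (simp add: sum.cartesian_product case_prod_beta')
  also have "{..<?L - 1} \<times> {..<?L} = T1 \<union> T2" by (auto simp: T1_def T2_def)
  also have "sum F (T1 \<union> T2) = sum F T1 + sum F T2"
    by (rule sum.union_disjoint)
       (auto simp: T1_def T2_def intro: finite_subset[of _ "{..<?L} \<times> {..<?L}"])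
  also have "sum F T1 = sum (\<lambda>x. F ((\<lambda>(i,j). (j, Suc i)) x)) T2"
  proof (rule sum.reindex_bij_betw[symmetric])
    show "bij_betw (\<lambda>(i,j). (j, Suc i)) T2 T1"
      by (rule bij_betwI[where g="\<lambda>(i,j). (j - 1, i)"]) (auto simp: T1_def T2_def)
  qed
  also have "\<dots> = - sum F T2"
    unfolding sum_negf[symmetric]
  proof (rule sum.cong[OF refl])
    fix x assume "x \<in> T2"
    then obtain i j where x: "x = (i,j)" "j < ?L" "i < ?L - 1" "j \<le> i" by (auto simp: T2_def)
    then show "F ((\<lambda>(i,j). (j, Suc i)) x) = - F x"
      using delete_delete[of j "Suc i" s] by (simp add: F_def sg_def)
  qed
  finally show ?thesis by simp
qed

section \<open>The prism operator\<close>

text \<open>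
  Two refinement projections f, g of one cover into another induce chain-homotopic cochain
  maps.\<close>

definition prism :: "('b \<Rightarrow> 'c) \<Rightarrow> ('b \<Rightarrow> 'c) \<Rightarrow> nat \<Rightarrow> 'b list \<Rightarrow> 'c list" where
  "prism f g i s = map f (take (Suc i) s) @ map g (drop i s)"

text \<open>The simplex that switches from f to g at position i (a face of two prism simplices).\<close>
definition switch :: "('b \<Rightarrow> 'c) \<Rightarrow> ('b \<Rightarrow> 'c) \<Rightarrow> nat \<Rightarrow> 'b list \<Rightarrow> 'c list" where
  "switch f g i s = map f (take i s) @ map g (drop i s)"

definition prism_op :: "('b \<Rightarrow> 'c) \<Rightarrow> ('b \<Rightarrow> 'c) \<Rightarrow> ('c list \<Rightarrow> 'g::ab_group_add) \<Rightarrow> 'b list \<Rightarrow> 'g" where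
  "prism_op f g z s = (\<Sum>i<length s. sg i (z (prism f g i s)))"

lemma length_prism: "i < length s \<Longrightarrow> length (prism f g i s) = Suc (length s)"
  by (simp add: prism_def)

lemma nth_prism: "i < length s \<Longrightarrow> k \<le> length s \<Longrightarrow>
    prism f g i s ! k = (if k \<le> i then f (s ! k) else g (s ! (k - 1)))"
  by (cases "k \<le> i"; cases "k = Suc i") (auto simp: prism_def nth_append min_def)

lemma set_prism: "set (prism f g i s) \<subseteq> f ` set s \<union> g ` set s"
  unfolding prism_def using set_take_subset set_drop_subset by fastforce

lemma length_switch: "length (switch f g i s) = length s"
  by (simp add: switch_def)

lemma nth_switch: "i \<le> length s \<Longrightarrow> k < length s \<Longrightarrow>
    switch f g i s ! k = (if k < i then f (s ! k) else g (s ! k))"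
  by (auto simp: switch_def nth_append min_def)

lemma delete_prism_below: "j < i \<Longrightarrow> i < length s \<Longrightarrow>
    cech_delete j (prism f g i s) = prism f g (i - 1) (cech_delete j s)"
  by (rule nth_equalityI) (auto simp: nth_delete length_prism nth_prism)

lemma delete_prism_at: "i < length s \<Longrightarrow> cech_delete i (prism f g i s) = switch f g i s"
  by (rule nth_equalityI) (auto simp: nth_delete length_prism nth_prism length_switch nth_switch)

lemma delete_prism_Suc: "i < length s \<Longrightarrow> cech_delete (Suc i) (prism f g i s) = switch f g (Suc i) s"
  by (rule nth_equalityI) (auto simp: nth_delete length_prism nth_prism length_switch nth_switch)

lemma delete_prism_above: "Suc i < j \<Longrightarrow> j \<le> length s \<Longrightarrow>
    cech_delete j (prism f g i s) = prism f g i (cech_delete (j - 1) s)"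
  by (rule nth_equalityI) (auto simp: nth_delete length_prism nth_prism)

lemma sum_split_at: "i < L \<Longrightarrow> (\<Sum>j<Suc L. G j) =
    (\<Sum>j<i. G j) + G i + G (Suc i) + (\<Sum>j\<in>{Suc (Suc i)..<Suc L}. G j)"
proof -
  assume i: "i < L"
  have "(\<Sum>j<Suc L. G j) = (\<Sum>j\<in>{0..<i}. G j) + (\<Sum>j\<in>{i..<Suc L}. G j)"
    using i by (simp add: lessThan_atLeast0 sum.atLeastLessThan_concat del: sum.op_ivl_Suc)
  also have "(\<Sum>j\<in>{i..<Suc L}. G j) = G i + G (Suc i) + (\<Sum>j\<in>{Suc (Suc i)..<Suc L}. G j)"
    using i by (simp add: sum.atLeast_Suc_lessThan add.assoc del: sum.op_ivl_Suc)
  finally show ?thesis by (simp add: lessThan_atLeast0 add.assoc)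
qed

text \<open>Expansion of one summand of the prism operator applied to \<delta>z: two switch terms, and
  prism terms over faces of s (which will cancel against \<delta> of the prism operator).\<close>
lemma prism_cobdry_summand:
  fixes z :: "'c set list \<Rightarrow> 'g::ab_group_add" and f g :: "'b \<Rightarrow> 'c set" and s :: "'b list"
  assumes i: "i < length s"
  defines "F \<equiv> \<lambda>k j. sg (k + j) (z (prism f g k (cech_delete j s)))"
  shows "sg i (cech_cobdry z (prism f g i s)) =
    (\<Sum>j<i. - F (i - 1) j) + (z (switch f g i s) - z (switch f g (Suc i) s))
      + (\<Sum>j\<in>{Suc i..<length s}. - F i j)"
proof -
  let ?T = "\<lambda>j. sg (i + j) (z (cech_delete j (prism f g i s)))"
  have "sg i (cech_cobdry z (prism f g i s)) = (\<Sum>j<Suc (length s). ?T j)"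
    by (simp add: cobdry_sg length_prism[OF i] sg_sum sg_sg del: sum.lessThan_Suc)
  also have "\<dots> = (\<Sum>j<i. ?T j) + ?T i + ?T (Suc i) + (\<Sum>j\<in>{Suc (Suc i)..<Suc (length s)}. ?T j)"
    using i by (rule sum_split_at)
  also have "(\<Sum>j<i. ?T j) = (\<Sum>j<i. - F (i - 1) j)"
  proof (rule sum.cong[OF refl])
    fix j assume "j \<in> {..<i}"
    then obtain i' where "j < i" "i = Suc i'" by (cases i) auto
    then show "?T j = - F (i - 1) j"
      using delete_prism_below[of j i s f g] i by (simp add: F_def sg_Suc)
  qed
  also have "?T i = z (switch f g i s)"
    by (simp add: delete_prism_at[OF i] sg_def)
  also have "?T (Suc i) = - z (switch f g (Suc i) s)"
    by (simp add: delete_prism_Suc[OF i] sg_def)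
  also have "(\<Sum>j\<in>{Suc (Suc i)..<Suc (length s)}. ?T j) = (\<Sum>j\<in>{Suc i..<length s}. - F i j)"
    unfolding sum.shift_bounds_Suc_ivl
  proof (rule sum.cong[OF refl])
    fix j assume "j \<in> {Suc i..<length s}"
    then show "?T (Suc j) = - F i j"
      using delete_prism_above[of i "Suc j" s f g] by (simp add: F_def sg_Suc)
  qed
  finally show ?thesis by (simp add: algebra_simps)
qed

lemma prism_homotopy:
  "cech_cobdry (prism_op f g z) s + prism_op f g (cech_cobdry z) s = z (map g s) - z (map f s)"
proof (cases s)
  case Nil
  then show ?thesis by (simp add: cobdry_sg prism_op_def)
next
  case (Cons a s')
  define L where "L = length s'"
  have len: "length s = Suc L" using Cons L_def by simp
  define F where "F k j = sg (k + j) (z (prism f g k (cech_delete j s)))" for k j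
  define H1 where "H1 i = (\<Sum>j<i. - F (i - 1) j)" for i
  define H4 where "H4 i = (\<Sum>j\<in>{Suc i..<Suc L}. - F i j)" for i
  have "prism_op f g (cech_cobdry z) s =
      (\<Sum>i<Suc L. H1 i) + (\<Sum>i<Suc L. H4 i)
      + (\<Sum>i<Suc L. z (switch f g i s) - z (switch f g (Suc i) s))"
    unfolding prism_op_def len[symmetric] sum.distrib[symmetric]
    by (rule sum.cong[OF refl]) (simp add: prism_cobdry_summand H1_def H4_def F_def len algebra_simps)
  also have "(\<Sum>i<Suc L. z (switch f g i s) - z (switch f g (Suc i) s)) = z (map g s) - z (map f s)"
    using sum_lessThan_telescope'[of "\<lambda>i. z (switch f g i s)" "Suc L"] len
    by (simp add: switch_def)
  also have "(\<Sum>i<Suc L. H1 i) = (\<Sum>k<L. \<Sum>j<Suc k. - F k j)"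
    by (simp add: sum.lessThan_Suc_shift H1_def del: sum.lessThan_Suc)
  also have "(\<Sum>i<Suc L. H4 i) = (\<Sum>k<L. \<Sum>j\<in>{Suc k..<Suc L}. - F k j)"
    by (simp add: H4_def)
  also have "(\<Sum>k<L. \<Sum>j<Suc k. - F k j) + (\<Sum>k<L. \<Sum>j\<in>{Suc k..<Suc L}. - F k j) =
      (\<Sum>k<L. (\<Sum>j<Suc k. - F k j) + (\<Sum>j\<in>{Suc k..<Suc L}. - F k j))"
    by (simp add: sum.distrib)
  also have "\<dots> = - (\<Sum>k<L. \<Sum>j<Suc L. F k j)"
    unfolding sum_negf[symmetric]
  proof (rule sum.cong[OF refl])
    fix k assume "k \<in> {..<L}"
    then show "(\<Sum>j<Suc k. - F k j) + (\<Sum>j\<in>{Suc k..<Suc L}. - F k j) = (\<Sum>j<Suc L. - F k j)"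
      by (simp add: lessThan_atLeast0 sum.atLeastLessThan_concat del: sum.op_ivl_Suc)
  qed
  also have "(\<Sum>k<L. \<Sum>j<Suc L. F k j) = (\<Sum>j<Suc L. \<Sum>k<L. F k j)"
    by (rule sum.swap)
  also have "\<dots> = cech_cobdry (prism_op f g z) s"
    by (simp add: cobdry_sg prism_op_def len sg_sum sg_sg F_def add.commute del: sum.lessThan_Suc)
  finally show ?thesis by (simp add: algebra_simps)
qed

abbreviation cech_zero_rep :: "('a, 'g::ab_group_add) cech_rep" where
  "cech_zero_rep \<equiv> ({UNIV}, \<lambda>_. 0)"

lemma nat_add_two: "\<not> n < -1 \<Longrightarrow> nat (n + 2) = Suc (nat (n + 1))" for n :: int
  by (simp add: nat_eq_iff)

lemma simplices_mono: "Y' \<subseteq> Y \<Longrightarrow> cech_simplices Y' U k \<subseteq> cech_simplices Y U k"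
  by (auto simp: cech_simplices_def)

lemma simplices_map:
  assumes "cech_refines_via W U p" "s \<in> cech_simplices Y W k"
  shows "map p s \<in> cech_simplices Y U k"
proof -
  have "\<Inter>(set s) \<subseteq> \<Inter>(set (map p s))"
    using assms unfolding cech_refines_via_def cech_simplices_def by auto
  then show ?thesis using assms unfolding cech_refines_via_def cech_simplices_def by auto
qed

lemma refines_via_trans:
  "cech_refines_via V U p \<Longrightarrow> cech_refines_via U T q \<Longrightarrow> cech_refines_via V T (q \<circ> p)"
  unfolding cech_refines_via_def by fastforce

text \<open>Any two open covers have a common refinement (the pairwise intersections).\<close>
lemma common_refinement:
  assumes W1: "cech_open_cover Y W1" and W2: "cech_open_cover Y W2"
  obtains W \<pi>1 \<pi>2 where "cech_open_cover Y W"
    "cech_refines_via W W1 \<pi>1" "cech_refines_via W W2 \<pi>2"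
proof -
  define W where "W = (\<lambda>(a,b). a \<inter> b) ` (W1 \<times> W2)"
  define \<pi> where "\<pi> w = (SOME ab. ab \<in> W1 \<times> W2 \<and> w = fst ab \<inter> snd ab)" for w
  have \<pi>: "\<pi> w \<in> W1 \<times> W2 \<and> w = fst (\<pi> w) \<inter> snd (\<pi> w)" if "w \<in> W" for w
    unfolding \<pi>_def by (rule someI_ex) (use that W_def in auto)
  have "cech_refines_via W W1 (fst \<circ> \<pi>)" "cech_refines_via W W2 (snd \<circ> \<pi>)"
    unfolding cech_refines_via_def using \<pi> by (auto simp: mem_Times_iff)
  moreover have "cech_open_cover Y W"
  proof -
    have "finite W" "\<forall>V\<in>W. open V" using W1 W2 unfolding W_def cech_open_cover_def by auto
    moreover have "Y \<subseteq> \<Union>W"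
    proof
      fix y assume "y \<in> Y"
      then obtain a b where "a \<in> W1" "b \<in> W2" "y \<in> a" "y \<in> b"
        using W1 W2 unfolding cech_open_cover_def by blast
      then show "y \<in> \<Union>W" unfolding W_def by blast
    qed
    ultimately show ?thesis unfolding cech_open_cover_def by blast
  qed
  ultimately show ?thesis using that by blast
qed

lemma cocycle_pullback:
  assumes p: "cech_refines_via V U p" and z: "cech_cocycle n Y U z"
  shows "cech_cocycle n Y V (\<lambda>s. z (map p s))"
proof (cases "n < -1")
  case False
  then have z0: "\<forall>t\<in>cech_simplices Y U (nat (n + 2)). cech_cobdry z t = 0"
    using z by (simp add: cech_cocycle_def)
  have "cech_cobdry (\<lambda>s. z (map p s)) s = 0" if s: "s \<in> cech_simplices Y V (nat (n + 2))" for s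
    using z0 simplices_map[OF p s] by (simp add: cobdry_map[symmetric])
  then show ?thesis by (simp add: cech_cocycle_def)
qed (simp add: cech_cocycle_def)

lemma cocycle_diff_cobdry:
  "cech_cocycle n Y V c \<Longrightarrow> cech_cocycle n Y V (\<lambda>s. c s - cech_cobdry b s)"
  unfolding cech_cocycle_def by (simp only: cobdry_diff cobdry_cobdry diff_zero)

lemma prism_simplex:
  assumes f: "cech_refines_via W U f" and g: "cech_refines_via W U g"
    and s: "s \<in> cech_simplices Y W k" and i: "i < length s"
  shows "prism f g i s \<in> cech_simplices Y U (Suc k)"
proof -
  have sW: "set s \<subseteq> W" and len: "length s = k" using s by (auto simp: cech_simplices_def)
  have fg: "w \<subseteq> f w \<and> f w \<in> U \<and> w \<subseteq> g w \<and> g w \<in> U" if "w \<in> W" for w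
    using f g that unfolding cech_refines_via_def by blast
  have vertex: "\<exists>w\<in>set s. w \<subseteq> x \<and> x \<in> U" if x: "x \<in> set (prism f g i s)" for x
  proof -
    obtain w where "w \<in> set s" "x = f w \<or> x = g w"
      using set_prism[of f g i s] x by blast
    then show ?thesis using fg sW by blast
  qed
  have "\<Inter>(set s) \<subseteq> \<Inter>(set (prism f g i s))"
    using vertex by (meson Inter_greatest Inter_lower subset_trans)
  moreover have "set (prism f g i s) \<subseteq> U"
    using vertex by blast
  ultimately show ?thesis
    using s len length_prism[OF i] by (auto simp: cech_simplices_def)
qed

lemma cocycle_contiguous:
  assumes f: "cech_refines_via W U f" and g: "cech_refines_via W U g"
    and z: "cech_cocycle n Y U z" and n: "\<not> n < -1"
    and s: "s \<in> cech_simplices Y W (nat (n + 1))"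
  shows "cech_cobdry (prism_op f g z) s = z (map g s) - z (map f s)"
proof -
  have "prism_op f g (cech_cobdry z) s = 0"
    unfolding prism_op_def
  proof (rule sum.neutral, rule ballI)
    fix i assume "i \<in> {..<length s}"
    then have "prism f g i s \<in> cech_simplices Y U (nat (n + 2))"
      using prism_simplex[OF f g s] nat_add_two[OF n] by simp
    then show "sg i (cech_cobdry z (prism f g i s)) = 0"
      using z n by (simp add: cech_cocycle_def sg_def)
  qed
  then show ?thesis using prism_homotopy[of f g z s] by simp
qed

section \<open>Cohomologous representatives\<close>

lemma rep_mono: "cech_is_rep n Y r \<Longrightarrow> Y' \<subseteq> Y \<Longrightarrow> cech_is_rep n Y' r"
  unfolding cech_is_rep_def cech_open_cover_def cech_cocycle_def
  using simplices_mono by blast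

lemma rel_mono: "cech_rel n Y r r' \<Longrightarrow> Y' \<subseteq> Y \<Longrightarrow> cech_rel n Y' r r'"
proof -
  assume r: "cech_rel n Y r r'" and Y: "Y' \<subseteq> Y"
  then obtain W p q where W: "cech_open_cover Y W" "cech_refines_via W (fst r) p"
      "cech_refines_via W (fst r') q"
    and cb: "cech_coboundary n Y W (\<lambda>s. snd r (map p s) - snd r' (map q s))"
    unfolding cech_rel_def by blast
  have "cech_open_cover Y' W" using W(1) Y unfolding cech_open_cover_def by blast
  moreover have "cech_coboundary n Y' W (\<lambda>s. snd r (map p s) - snd r' (map q s))"
    using cb simplices_mono[OF Y] unfolding cech_coboundary_def by blast
  ultimately show ?thesis using W unfolding cech_rel_def by blast
qed

lemma rel_refl: "cech_is_rep n Y r \<Longrightarrow> cech_rel n Y r r"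
  unfolding cech_rel_def cech_is_rep_def cech_coboundary_def
  by (rule exI[of _ "fst r"], rule exI[of _ id], rule exI[of _ id])
     (auto simp: cech_refines_via_def intro: exI[of _ "\<lambda>_. 0"] simp: cobdry_zero)

lemma rel_sym: "cech_rel n Y r r' \<Longrightarrow> cech_rel n Y r' r"
proof -
  assume "cech_rel n Y r r'"
  then obtain W p q b where W: "cech_open_cover Y W" "cech_refines_via W (fst r) p"
      "cech_refines_via W (fst r') q"
    and b: "n < -1 \<or> (\<forall>s\<in>cech_simplices Y W (nat (n + 1)).
              snd r (map p s) - snd r' (map q s) = cech_cobdry b s)"
    unfolding cech_rel_def cech_coboundary_def by blast
  have "n < -1 \<or> (\<forall>s\<in>cech_simplices Y W (nat (n + 1)).
          snd r' (map q s) - snd r (map p s) = cech_cobdry (\<lambda>t. - b t) s)"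
    using b by (auto simp: cobdry_uminus) (metis minus_diff_eq)
  then have "cech_coboundary n Y W (\<lambda>s. snd r' (map q s) - snd r (map p s))"
    unfolding cech_coboundary_def by blast
  then show ?thesis using W unfolding cech_rel_def by blast
qed

text \<open>Transitivity: on a common refinement, the two projections into the middle cover differ
  by the prism coboundary, so the two bounding cochains can be glued.\<close>
lemma rel_trans:
  assumes rep2: "cech_is_rep n Y r2" and r12: "cech_rel n Y r1 r2" and r23: "cech_rel n Y r2 r3"
  shows "cech_rel n Y r1 r3"
proof (cases "n < -1")
  case True
  obtain W1 p1 q2 where W1: "cech_open_cover Y W1" "cech_refines_via W1 (fst r1) p1"
    using r12 unfolding cech_rel_def by blast
  obtain W2 p2 q3 where W2: "cech_open_cover Y W2" "cech_refines_via W2 (fst r3) q3"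
    using r23 unfolding cech_rel_def by blast
  obtain W \<pi>1 \<pi>2 where W: "cech_open_cover Y W"
    and ref: "cech_refines_via W W1 \<pi>1" "cech_refines_via W W2 \<pi>2"
    using common_refinement[OF W1(1) W2(1)] .
  have "cech_coboundary n Y W (\<lambda>s. snd r1 (map (p1 \<circ> \<pi>1) s) - snd r3 (map (q3 \<circ> \<pi>2) s))"
    using True unfolding cech_coboundary_def by blast
  then show ?thesis
    using W refines_via_trans[OF ref(1) W1(2)] refines_via_trans[OF ref(2) W2(2)]
    unfolding cech_rel_def by blast
next
  case n: False
  obtain W1 p1 q2 b1 where W1: "cech_open_cover Y W1" "cech_refines_via W1 (fst r1) p1"
      "cech_refines_via W1 (fst r2) q2"
    and b1: "\<forall>s\<in>cech_simplices Y W1 (nat (n + 1)).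
               snd r1 (map p1 s) - snd r2 (map q2 s) = cech_cobdry b1 s"
    using r12 n unfolding cech_rel_def cech_coboundary_def by blast
  obtain W2 p2 q3 b2 where W2: "cech_open_cover Y W2" "cech_refines_via W2 (fst r2) p2"
      "cech_refines_via W2 (fst r3) q3"
    and b2: "\<forall>s\<in>cech_simplices Y W2 (nat (n + 1)).
               snd r2 (map p2 s) - snd r3 (map q3 s) = cech_cobdry b2 s"
    using r23 n unfolding cech_rel_def cech_coboundary_def by blast
  obtain W \<pi>1 \<pi>2 where W: "cech_open_cover Y W"
    and ref1: "cech_refines_via W W1 \<pi>1" and ref2: "cech_refines_via W W2 \<pi>2"
    using common_refinement[OF W1(1) W2(1)] .
  define f where "f = q2 \<circ> \<pi>1"
  define g where "g = p2 \<circ> \<pi>2"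
  define z where "z = snd r2"
  have f: "cech_refines_via W (fst r2) f" and g: "cech_refines_via W (fst r2) g"
    using refines_via_trans ref1 ref2 W1(3) W2(2) unfolding f_def g_def by blast+
  have z: "cech_cocycle n Y (fst r2) z"
    using rep2 unfolding cech_is_rep_def z_def by blast
  define b where "b t = b1 (map \<pi>1 t) - prism_op f g z t + b2 (map \<pi>2 t)" for t
  have "snd r1 (map (p1 \<circ> \<pi>1) s) - snd r3 (map (q3 \<circ> \<pi>2) s) = cech_cobdry b s"
    if s: "s \<in> cech_simplices Y W (nat (n + 1))" for s
  proof -
    have e1: "snd r1 (map p1 (map \<pi>1 s)) - z (map f s) = cech_cobdry b1 (map \<pi>1 s)"
      using bspec[OF b1 simplices_map[OF ref1 s]] by (simp add: z_def f_def)
    have e2: "z (map g s) - snd r3 (map q3 (map \<pi>2 s)) = cech_cobdry b2 (map \<pi>2 s)"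
      using bspec[OF b2 simplices_map[OF ref2 s]] by (simp add: z_def g_def)
    have "snd r1 (map (p1 \<circ> \<pi>1) s) - snd r3 (map (q3 \<circ> \<pi>2) s) =
        (snd r1 (map p1 (map \<pi>1 s)) - z (map f s)) - (z (map g s) - z (map f s))
        + (z (map g s) - snd r3 (map q3 (map \<pi>2 s)))"
      by (simp add: algebra_simps)
    also have "\<dots> = cech_cobdry b s"
      unfolding e1 e2 cocycle_contiguous[OF f g z n s, symmetric] b_def
        cobdry_add cobdry_diff cobdry_map[symmetric] ..
    finally show ?thesis .
  qed
  then have "cech_coboundary n Y W (\<lambda>s. snd r1 (map (p1 \<circ> \<pi>1) s) - snd r3 (map (q3 \<circ> \<pi>2) s))"
    unfolding cech_coboundary_def by blast
  then show ?thesis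
    using W refines_via_trans[OF ref1 W1(2)] refines_via_trans[OF ref2 W2(3)]
    unfolding cech_rel_def by blast
qed

lemma rel_zero_low_degree:
  assumes n: "n < -1" and U: "cech_open_cover Y (fst r)"
  shows "cech_rel n Y cech_zero_rep r"
proof -
  have "cech_coboundary n Y (fst r) (\<lambda>s. snd cech_zero_rep (map (\<lambda>_. UNIV) s) - snd r (map id s))"
    using n by (simp add: cech_coboundary_def)
  moreover have "cech_refines_via (fst r) (fst cech_zero_rep) (\<lambda>_. UNIV)"
    "cech_refines_via (fst r) (fst r) id"
    by (auto simp: cech_refines_via_def)
  ultimately show ?thesis using U unfolding cech_rel_def by blast
qed

lemma rel_zero_bounding_cochain:
  assumes "cech_rel n Y cech_zero_rep (U, z)" and n: "\<not> n < -1"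
  obtains W q b where "cech_open_cover Y W" "cech_refines_via W U q"
    "\<And>s. s \<in> cech_simplices Y W (nat (n + 1)) \<Longrightarrow> z (map q s) = cech_cobdry b s"
proof -
  obtain W p q where W: "cech_open_cover Y W" "cech_refines_via W U q"
    and cb: "cech_coboundary n Y W (\<lambda>s. 0 - z (map q s))"
    using assms(1) unfolding cech_rel_def by auto
  then obtain b0 where b0: "\<forall>s\<in>cech_simplices Y W (nat (n + 1)). 0 - z (map q s) = cech_cobdry b0 s"
    using n unfolding cech_coboundary_def by blast
  have "z (map q s) = cech_cobdry (\<lambda>t. - b0 t) s" if "s \<in> cech_simplices Y W (nat (n + 1))" for s
    using b0 that by (simp add: cobdry_uminus) (metis minus_diff_eq diff_zero)
  then show ?thesis using that W by blast
qed

lemma class_mem: "r' \<in> cech_class n Y r \<longleftrightarrow> cech_is_rep n Y r' \<and> cech_rel n Y r r'"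
  by (simp add: cech_class_def)

lemma in_own_class: "cech_is_rep n Y r \<Longrightarrow> r \<in> cech_class n Y r"
  by (simp add: class_mem rel_refl)

lemma class_eq:
  assumes "cech_is_rep n Y r" "cech_is_rep n Y r'" "cech_rel n Y r r'"
  shows "cech_class n Y r = cech_class n Y r'"
  using assms rel_sym rel_trans unfolding cech_class_def by blast

lemma zero_rep: "cech_is_rep n Y cech_zero_rep"
  by (simp add: cech_is_rep_def cech_open_cover_def cech_cocycle_def cobdry_zero)

lemma H_rep: "c \<in> cech_H n Y \<Longrightarrow> r \<in> c \<Longrightarrow> cech_is_rep n Y r"
  unfolding cech_H_def by (auto simp: class_mem)

lemma H_class:
  assumes "c \<in> cech_H n Y" "r \<in> c"
  shows "c = cech_class n Y r"
proof -
  obtain r0 where r0: "cech_is_rep n Y r0" "c = cech_class n Y r0"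
    using assms(1) unfolding cech_H_def by blast
  then have "cech_is_rep n Y r" "cech_rel n Y r0 r" using assms(2) by (auto simp: class_mem)
  then show ?thesis using class_eq r0 by metis
qed

lemma H_some: "c \<in> cech_H n Y \<Longrightarrow> (SOME r. r \<in> c) \<in> c"
  unfolding cech_H_def by (auto intro: someI in_own_class)

lemma incl_class:
  assumes r: "cech_is_rep n Y r" and Y': "Y' \<subseteq> Y"
  shows "cech_incl n Y' Y (cech_class n Y r) = cech_class n Y' r"
proof -
  define r' where "r' = (SOME r'. r' \<in> cech_class n Y r)"
  have "r' \<in> cech_class n Y r"
    unfolding r'_def by (rule someI) (rule in_own_class[OF r])
  then have "cech_is_rep n Y r'" "cech_rel n Y r r'" by (auto simp: class_mem)
  then have "cech_class n Y' r = cech_class n Y' r'"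
    using class_eq rep_mono rel_mono r Y' by metis
  then show ?thesis by (simp add: cech_incl_def r'_def)
qed

lemma class_eq_zero_iff:
  assumes r: "cech_is_rep n Y r"
  shows "cech_class n Y r = cech_zero n Y \<longleftrightarrow> cech_rel n Y cech_zero_rep r"
proof
  assume "cech_class n Y r = cech_zero n Y"
  then show "cech_rel n Y cech_zero_rep r"
    using in_own_class[OF r] by (simp add: cech_zero_def class_mem)
next
  assume "cech_rel n Y cech_zero_rep r"
  then show "cech_class n Y r = cech_zero n Y"
    using class_eq[OF zero_rep r] by (simp add: cech_zero_def)
qed

lemma incl_zero_iff:
  assumes c: "c \<in> cech_H n Y" and r: "r \<in> c" and Y': "Y' \<subseteq> Y"
  shows "cech_incl n Y' Y c = cech_zero n Y' \<longleftrightarrow> cech_rel n Y' cech_zero_rep r"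
  using H_class[OF c r] incl_class[OF H_rep[OF c r] Y'] class_eq_zero_iff rep_mono H_rep[OF c r] Y'
  by metis

lemma kernel_iff:
  assumes c: "c \<in> cech_H n Y" and r: "r \<in> c" and Y': "Y' \<subseteq> Y"
  shows "c \<in> cech_kernel n Y' Y \<longleftrightarrow> cech_rel n Y' cech_zero_rep r"
  using incl_zero_iff[OF assms] c by (simp add: cech_kernel_def)

lemma kernel_mono:
  assumes "Y1 \<subseteq> Y2" "Y2 \<subseteq> Y"
  shows "cech_kernel n Y2 Y \<subseteq> cech_kernel n Y1 Y"
proof
  fix c assume c2: "c \<in> cech_kernel n Y2 Y"
  then have c: "c \<in> cech_H n Y" by (simp add: cech_kernel_def)
  define r where "r = (SOME r. r \<in> c)"
  have r: "r \<in> c" using H_some[OF c] by (simp add: r_def)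
  have "cech_rel n Y2 cech_zero_rep r" using c2 kernel_iff[OF c r assms(2)] by simp
  then have "cech_rel n Y1 cech_zero_rep r" using rel_mono assms(1) by blast
  then show "c \<in> cech_kernel n Y1 Y" using kernel_iff[OF c r order_trans[OF assms]] by simp
qed

section \<open>Shrinking covers near a compact set\<close>

text \<open>Take for N
  the complement of the finitely many "bad" closed sets B \<inter> \<Inter>(K ` G).\<close>
lemma avoiding_neighbourhood:
  assumes D: "finite D" and B: "closed B"
    and K: "\<And>d. d \<in> D \<Longrightarrow> closed (K d)" "\<And>d. d \<in> D \<Longrightarrow> K d \<subseteq> W d"
  obtains N where "open N" "C \<subseteq> N"
    "\<And>G. G \<subseteq> D \<Longrightarrow> B \<inter> N \<inter> \<Inter>(K ` G) \<noteq> {} \<Longrightarrow> C \<inter> \<Inter>(W ` G) \<noteq> {}"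
proof
  define bad where "bad = {G. G \<subseteq> D \<and> C \<inter> \<Inter>(W ` G) = {}}"
  define N where "N = - (\<Union>G\<in>bad. B \<inter> \<Inter>(K ` G))"
  have "finite bad" using D unfolding bad_def by simp
  moreover have "closed (B \<inter> \<Inter>(K ` G))" if "G \<in> bad" for G
    using that K(1) B unfolding bad_def by (intro closed_Int closed_Inter) auto
  ultimately show "open N" unfolding N_def by (intro open_Compl closed_UN) auto
  show "C \<subseteq> N"
  proof
    fix x assume "x \<in> C"
    then have "x \<notin> B \<inter> \<Inter>(K ` G)" if "G \<in> bad" for G
      using that K(2) unfolding bad_def by blast
    then show "x \<in> N" unfolding N_def by blast
  qed
  show "C \<inter> \<Inter>(W ` G) \<noteq> {}" if "G \<subseteq> D" "B \<inter> N \<inter> \<Inter>(K ` G) \<noteq> {}" for G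
    using that unfolding N_def bad_def by blast
qed

lemma nerve_shrinking:
  fixes C B :: "'a::metric_space set"
  assumes C: "compact C" and B: "closed B" and W: "cech_open_cover C W"
  obtains V \<phi> where "cech_open_cover C V" "cech_refines_via V W \<phi>"
    "\<And>s k. s \<in> cech_simplices B V k \<Longrightarrow> s \<noteq> [] \<Longrightarrow> map \<phi> s \<in> cech_simplices C W k"
proof -
  have "\<exists>w e. w \<in> W \<and> e > 0 \<and> cball x e \<subseteq> w" if x: "x \<in> C" for x
  proof -
    obtain w where "w \<in> W" "x \<in> w" "open w" using W x unfolding cech_open_cover_def by blast
    then show ?thesis using open_contains_cball by blast
  qed
  then obtain ww ee where ww: "\<And>x. x \<in> C \<Longrightarrow> ww x \<in> W \<and> ee x > 0 \<and> cball x (ee x) \<subseteq> ww x"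
    by metis
  then have "C \<subseteq> (\<Union>x\<in>C. ball x (ee x))" by auto
  then obtain D where DC: "D \<subseteq> C" and D: "finite D" and CD: "C \<subseteq> (\<Union>x\<in>D. ball x (ee x))"
    using compactE_image[OF C, of C "\<lambda>x. ball x (ee x)"] by auto
  have Ksub: "cball d (ee d) \<subseteq> ww d" if "d \<in> D" for d using ww DC that by blast
  obtain N where N: "open N" "C \<subseteq> N"
    and nerve: "\<And>G. G \<subseteq> D \<Longrightarrow> B \<inter> N \<inter> \<Inter>((\<lambda>x. cball x (ee x)) ` G) \<noteq> {} \<Longrightarrow>
                  C \<inter> \<Inter>(ww ` G) \<noteq> {}"
    by (rule avoiding_neighbourhood[of D B "\<lambda>x. cball x (ee x)" ww C]) (use D B Ksub in auto)
  define V where "V = (\<lambda>x. ball x (ee x) \<inter> N) ` D"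
  define \<xi> where "\<xi> v = (SOME x. x \<in> D \<and> v = ball x (ee x) \<inter> N)" for v
  have \<xi>: "\<xi> v \<in> D \<and> v = ball (\<xi> v) (ee (\<xi> v)) \<inter> N" if "v \<in> V" for v
    unfolding \<xi>_def by (rule someI_ex) (use that V_def in auto)
  have "C \<subseteq> \<Union>V"
  proof
    fix x assume "x \<in> C"
    then obtain d where "d \<in> D" "x \<in> ball d (ee d)" "x \<in> N" using CD N by blast
    then show "x \<in> \<Union>V" unfolding V_def by blast
  qed
  then have "cech_open_cover C V"
    using D N(1) unfolding cech_open_cover_def V_def by (auto intro: open_Int)
  moreover have ref: "cech_refines_via V W (ww \<circ> \<xi>)"
    unfolding cech_refines_via_def
  proof
    fix v assume "v \<in> V"
    then have "\<xi> v \<in> D" "v \<subseteq> ball (\<xi> v) (ee (\<xi> v))" using \<xi> by blast+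
    moreover have "ball (\<xi> v) (ee (\<xi> v)) \<subseteq> ww (\<xi> v)"
      using Ksub[OF \<open>\<xi> v \<in> D\<close>] ball_subset_cball by blast
    ultimately show "(ww \<circ> \<xi>) v \<in> W \<and> v \<subseteq> (ww \<circ> \<xi>) v"
      using ww[of "\<xi> v"] DC by auto
  qed
  moreover have "map (ww \<circ> \<xi>) s \<in> cech_simplices C W k"
    if s: "s \<in> cech_simplices B V k" and ne: "s \<noteq> []" for s k
  proof -
    obtain y where y: "y \<in> B" "y \<in> \<Inter>(set s)" using s by (auto simp: cech_simplices_def)
    have sV: "set s \<subseteq> V" using s by (simp add: cech_simplices_def)
    have GD: "\<xi> ` set s \<subseteq> D" using \<xi> sV by blast
    have "hd s \<in> set s" using ne by simp
    then have "y \<in> N" using \<xi>[of "hd s"] y(2) sV by blast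
    moreover have "y \<in> cball x (ee x)" if "x \<in> \<xi> ` set s" for x
    proof -
      obtain v where "v \<in> set s" "x = \<xi> v" using \<open>x \<in> \<xi> ` set s\<close> by blast
      then show ?thesis using \<xi>[of v] sV y(2) ball_subset_cball by blast
    qed
    ultimately have "B \<inter> N \<inter> \<Inter>((\<lambda>x. cball x (ee x)) ` \<xi> ` set s) \<noteq> {}"
      using y(1) by blast
    then have "C \<inter> \<Inter>(set (map (ww \<circ> \<xi>) s)) \<noteq> {}"
      using nerve[OF GD] by (simp add: image_image)
    moreover have "map (ww \<circ> \<xi>) s \<in> cech_simplices B W k"
      using simplices_map[OF ref s] .
    ultimately show ?thesis by (simp add: cech_simplices_def)
  qed
  ultimately show ?thesis using that by blast
qed

lemma glued_cover:
  assumes V: "cech_open_cover C V" "cech_refines_via V U p" and U: "cech_open_cover X U"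
    and B: "closed B" and AX: "A \<subseteq> X" and AB: "A \<inter> B \<subseteq> C"
  obtains pt where "cech_open_cover A (V \<union> (\<lambda>u. u - B) ` U)"
    "cech_refines_via (V \<union> (\<lambda>u. u - B) ` U) U pt" "\<And>v. v \<in> V \<Longrightarrow> pt v = p v"
proof
  define pt where "pt v = (if v \<in> V then p v else (SOME u. u \<in> U \<and> v = u - B))" for v
  show "pt v = p v" if "v \<in> V" for v using that by (simp add: pt_def)
  show "cech_open_cover A (V \<union> (\<lambda>u. u - B) ` U)"
    using V(1) U B AX AB unfolding cech_open_cover_def by (auto intro!: open_Diff)
  show "cech_refines_via (V \<union> (\<lambda>u. u - B) ` U) U pt"
    unfolding cech_refines_via_def
  proof
    fix v assume v: "v \<in> V \<union> (\<lambda>u. u - B) ` U"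
    show "pt v \<in> U \<and> v \<subseteq> pt v"
    proof (cases "v \<in> V")
      case True
      then show ?thesis using V(2) by (simp add: pt_def cech_refines_via_def)
    next
      case False
      then have "\<exists>u. u \<in> U \<and> v = u - B" using v by auto
      then have "(SOME u. u \<in> U \<and> v = u - B) \<in> U \<and> v = (SOME u. u \<in> U \<and> v = u - B) - B"
        by (rule someI_ex)
      then show ?thesis using False by (auto simp: pt_def)
    qed
  qed
qed

section \<open>Killing a cocycle near B\<close>

lemma cocycle_empty_simplex:
  assumes z: "cech_cocycle (-1) Y U z" and U: "cech_open_cover Y U" and Y: "Y \<noteq> {}"
  shows "z [] = 0"
proof -
  obtain y u where "y \<in> Y" "u \<in> U" "y \<in> u" using U Y unfolding cech_open_cover_def by blast
  then have "[u] \<in> cech_simplices Y U 1" by (auto simp: cech_simplices_def)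
  then have "cech_cobdry z [u] = 0" using z by (simp add: cech_cocycle_def)
  then show ?thesis by (simp add: cech_cobdry_def cech_delete_def)
qed

text \<open>Near B the pulled-back cocycle equals the coboundary of the pulled-back bounding cochain:
  a simplex meeting B only uses sets of V, where the projection factors through W.\<close>
lemma pullback_bounded_near:
  assumes nerve: "\<And>s. s \<in> cech_simplices B V k \<Longrightarrow> s \<noteq> [] \<Longrightarrow> map \<phi> s \<in> cech_simplices C W k"
    and bound: "\<And>s. s \<in> cech_simplices C W k \<Longrightarrow> z (map q s) = cech_cobdry b s"
    and pt: "\<And>v. v \<in> V \<Longrightarrow> pt v = q (\<phi> v)"
    and away: "\<And>v. v \<in> V' \<Longrightarrow> v \<inter> B = {}"
    and empty: "k = 0 \<Longrightarrow> z [] = 0"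
    and s: "s \<in> cech_simplices B (V \<union> V') k"
  shows "z (map pt s) = cech_cobdry (\<lambda>t. b (map \<phi> t)) s"
proof (cases "s = []")
  case True
  then show ?thesis using empty s by (simp add: cech_cobdry_def cech_simplices_def)
next
  case False
  obtain y where y: "y \<in> B" "y \<in> \<Inter>(set s)" using s by (auto simp: cech_simplices_def)
  have sV: "set s \<subseteq> V"
    using s y away unfolding cech_simplices_def by blast
  then have "s \<in> cech_simplices B V k"
    using s by (auto simp: cech_simplices_def)
  then have "z (map q (map \<phi> s)) = cech_cobdry b (map \<phi> s)"
    by (rule bound[OF nerve[OF _ False]])
  moreover have "map pt s = map q (map \<phi> s)"
    using sV pt by auto
  ultimately show ?thesis by (simp only: cobdry_map)
qed

text \<open>Extension by zero: a cocycle on a cover V of A \<union> B which vanishes on all simplices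
  meeting B extends, by zero on simplices involving the extra open set -A, to a cocycle on the
  cover V \<union> {-A}.  (A simplex involving -A meets A \<union> B only in B.)\<close>
lemma extend_by_zero_cocycle:
  fixes c :: "'a set list \<Rightarrow> 'g::ab_group_add"
  assumes c: "cech_cocycle n (A \<union> B) V c" and n: "\<not> n < -1"
    and vanish: "\<forall>s\<in>cech_simplices B V (nat (n + 1)). c s = 0"
  shows "cech_cocycle n (A \<union> B) (insert (- A) V) (\<lambda>t. if set t \<subseteq> V then c t else 0)"
proof -
  let ?c = "\<lambda>t. if set t \<subseteq> V then c t else 0"
  have "cech_cobdry ?c t = 0" if t: "t \<in> cech_simplices (A \<union> B) (insert (- A) V) (nat (n + 2))" for t
  proof (cases "set t \<subseteq> V")
    case True
    then have "cech_cobdry ?c t = cech_cobdry c t"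
      using set_delete[of _ t] by (intro cobdry_cong) (metis order_trans)
    also have "\<dots> = 0"
      using c n t True by (auto simp: cech_cocycle_def cech_simplices_def)
    finally show ?thesis .
  next
    case False
    have "?c (cech_delete i t) = 0" if i: "i < length t" for i
    proof (cases "set (cech_delete i t) \<subseteq> V")
      case True
      then have "t ! i \<notin> V" using False set_delete_insert[OF i] by auto
      moreover have "t ! i \<in> insert (- A) V" using t nth_mem[OF i] by (auto simp: cech_simplices_def)
      ultimately have "t ! i = - A" by blast
      moreover obtain y where "y \<in> A \<union> B" "y \<in> \<Inter>(set t)" using t by (auto simp: cech_simplices_def)
      ultimately have "y \<in> B \<inter> \<Inter>(set (cech_delete i t))"
        using i set_delete[of i t] nth_mem[OF i] by auto
      then have "cech_delete i t \<in> cech_simplices B V (nat (n + 1))"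
        using t i True nat_add_two[OF n] by (auto simp: cech_simplices_def)
      then show ?thesis using vanish True by simp
    qed simp
    then show ?thesis unfolding cobdry_sg by (intro sum.neutral) (simp add: sg_def)
  qed
  then show ?thesis by (simp add: cech_cocycle_def)
qed

lemma rel_zero_of_vanishing:
  assumes U: "cech_open_cover Y U" and vanish: "\<forall>s\<in>cech_simplices Y U (nat (n + 1)). c s = 0"
  shows "cech_rel n Y cech_zero_rep (U, c)"
proof -
  have "cech_coboundary n Y U (\<lambda>s. 0 - c (map id s))"
    using vanish cobdry_zero unfolding cech_coboundary_def by fastforce
  moreover have "cech_refines_via U {UNIV} (\<lambda>_. UNIV)" "cech_refines_via U U id"
    by (auto simp: cech_refines_via_def)
  ultimately show ?thesis using U unfolding cech_rel_def by fastforce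
qed

text \<open>If a cocycle z on a cover U of A \<union> B, pulled back to a cover of A, is a coboundary on all
  simplices meeting B, then subtracting that coboundary and extending by zero yields a cocycle
  on A \<union> B which is cohomologous to zero on B and to z on A.\<close>
lemma extension_from_local_bound:
  assumes VA: "cech_open_cover A VA" "cech_refines_via VA U pt" and A: "closed A"
    and z: "cech_cocycle n (A \<union> B) U z" and n: "\<not> n < -1"
    and bound: "\<forall>s\<in>cech_simplices B VA (nat (n + 1)). z (map pt s) = cech_cobdry \<beta> s"
  obtains r0 where "cech_is_rep n (A \<union> B) r0" "cech_rel n B cech_zero_rep r0" "cech_rel n A r0 (U, z)"
proof
  define c where "c s = z (map pt s) - cech_cobdry \<beta> s" for s
  define cc where "cc t = (if set t \<subseteq> VA then c t else 0)" for t
  have c_vanish: "\<forall>s\<in>cech_simplices B VA (nat (n + 1)). c s = 0"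
    using bound by (simp add: c_def)
  have "cech_cocycle n (A \<union> B) VA c"
    unfolding c_def by (intro cocycle_diff_cobdry cocycle_pullback[OF VA(2) z])
  then have "cech_cocycle n (A \<union> B) (insert (- A) VA) cc"
    unfolding cc_def using extend_by_zero_cocycle n c_vanish by blast
  moreover have cover: "cech_open_cover (A \<union> B) (insert (- A) VA)"
    using VA(1) A unfolding cech_open_cover_def by (auto simp: open_Compl)
  ultimately show "cech_is_rep n (A \<union> B) (insert (- A) VA, cc)"
    by (simp add: cech_is_rep_def)
  have "cech_open_cover B (insert (- A) VA)"
    using cover unfolding cech_open_cover_def by auto
  moreover have "\<forall>s\<in>cech_simplices B (insert (- A) VA) (nat (n + 1)). cc s = 0"
    using c_vanish by (auto simp: cc_def cech_simplices_def)
  ultimately show "cech_rel n B cech_zero_rep (insert (- A) VA, cc)"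
    by (rule rel_zero_of_vanishing)
  have "\<forall>s\<in>cech_simplices A VA (nat (n + 1)).
      cc (map id s) - z (map pt s) = cech_cobdry (\<lambda>t. - \<beta> t) s"
    by (auto simp: cc_def c_def cech_simplices_def cobdry_uminus)
  then have "cech_coboundary n A VA (\<lambda>s. cc (map id s) - z (map pt s))"
    unfolding cech_coboundary_def by blast
  moreover have "cech_refines_via VA (insert (- A) VA) id"
    by (auto simp: cech_refines_via_def)
  ultimately show "cech_rel n A (insert (- A) VA, cc) (U, z)"
    using VA unfolding cech_rel_def fst_conv snd_conv by blast
qed

lemma vanishing_extension:
  fixes X A B :: "'a::metric_space set" and r :: "('a, 'g::ab_group_add) cech_rep"
  assumes X: "compact X" and A: "closed A" "A \<subseteq> X" "A \<noteq> {}" and B: "closed B" "B \<subseteq> X"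
    and r: "cech_is_rep n X r" and rC: "cech_rel n (A \<inter> B) cech_zero_rep r"
  obtains r0 where "cech_is_rep n (A \<union> B) r0" "cech_rel n B cech_zero_rep r0" "cech_rel n A r0 r"
proof (cases "n < -1")
  case True
  then have "cech_rel n B cech_zero_rep r"
    using r B(2) by (intro rel_zero_low_degree) (auto simp: cech_is_rep_def cech_open_cover_def)
  then show ?thesis
    using that rep_mono[OF r] rel_refl[OF rep_mono[OF r A(2)]] A(2) B(2) by blast
next
  case n: False
  obtain U z where r_def: "r = (U, z)" by (cases r)
  define C where "C = A \<inter> B"
  have U: "cech_open_cover X U" and z: "cech_cocycle n X U z"
    using r by (auto simp: cech_is_rep_def r_def)
  obtain W q b where W: "cech_open_cover C W" "cech_refines_via W U q"
    and bound: "\<And>s. s \<in> cech_simplices C W (nat (n + 1)) \<Longrightarrow> z (map q s) = cech_cobdry b s"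
    using rel_zero_bounding_cochain[of n C U z] rC n unfolding C_def r_def by blast
  have "C = X \<inter> C" using A(2) unfolding C_def by blast
  then have "compact C" using compact_Int_closed[OF X, of C] A(1) B(1) unfolding C_def by auto
  (* shrink W so that simplices meeting B project to simplices meeting A \<inter> B *)
  obtain V \<phi> where V: "cech_open_cover C V" "cech_refines_via V W \<phi>"
    and nerve: "\<And>s k. s \<in> cech_simplices B V k \<Longrightarrow> s \<noteq> [] \<Longrightarrow> map \<phi> s \<in> cech_simplices C W k"
    using nerve_shrinking[OF \<open>compact C\<close> B(1) W(1)] by blast
  have Vq: "cech_refines_via V U (q \<circ> \<phi>)" using refines_via_trans[OF V(2) W(2)] .
  (* away from B, use the sets of U minus B *)
  obtain pt where VA: "cech_open_cover A (V \<union> (\<lambda>u. u - B) ` U)"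
      "cech_refines_via (V \<union> (\<lambda>u. u - B) ` U) U pt" and pt: "\<And>v. v \<in> V \<Longrightarrow> pt v = (q \<circ> \<phi>) v"
    using glued_cover[OF V(1) Vq U B(1) A(2)] unfolding C_def by blast
  have empty: "z [] = 0" if "nat (n + 1) = 0"
  proof -
    have "n + 1 \<le> 0" using that by simp
    then have "n = -1" using n by linarith
    moreover have "X \<noteq> {}" using A(2,3) by blast
    ultimately show ?thesis using cocycle_empty_simplex[of X U z] z U by simp
  qed
  have "\<forall>s\<in>cech_simplices B (V \<union> (\<lambda>u. u - B) ` U) (nat (n + 1)).
      z (map pt s) = cech_cobdry (\<lambda>t. b (map \<phi> t)) s"
  proof
    fix s assume s: "s \<in> cech_simplices B (V \<union> (\<lambda>u. u - B) ` U) (nat (n + 1))"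
    have away: "v \<inter> B = {}" if "v \<in> (\<lambda>u. u - B) ` U" for v using that by auto
    show "z (map pt s) = cech_cobdry (\<lambda>t. b (map \<phi> t)) s"
      using pullback_bounded_near[where B=B and V=V and k="nat (n + 1)" and \<phi>=\<phi> and C=C and W=W
          and z=z and q=q and b=b and pt=pt and V'="(\<lambda>u. u - B) ` U",
          OF nerve bound _ away empty s] pt by simp
  qed
  moreover have "cech_cocycle n (A \<union> B) U z"
    using rep_mono[OF r] A(2) B(2) by (simp add: cech_is_rep_def r_def)
  ultimately obtain r0 where "cech_is_rep n (A \<union> B) r0" "cech_rel n B cech_zero_rep r0"
      "cech_rel n A r0 (U, z)"
    using extension_from_local_bound[OF VA A(1) _ n] by blast
  then show ?thesis using that r_def by blast
qed

theorem lemma2p2: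
  fixes X A B :: "'a::metric_space set" and n :: int
    and \<alpha> :: "('a, 'g::ab_group_add) cech_rep set"
  assumes "compact X"
    and "\<alpha> \<in> cech_H n X" and "\<alpha> \<noteq> cech_zero n X"
    and "cech_carrier n X A \<alpha>"
    and "closed B" and "B \<subseteq> X"
  shows "A \<subseteq> B \<longleftrightarrow>
    (cech_kernel n B (A \<union> B) :: ('a, 'g) cech_rep set set) \<subseteq> cech_kernel n A (A \<union> B)"
proof
  assume "A \<subseteq> B"
  then show "cech_kernel n B (A \<union> B) \<subseteq> cech_kernel n A (A \<union> B)"
    by (intro kernel_mono) auto
next
  assume K: "(cech_kernel n B (A \<union> B) :: ('a, 'g) cech_rep set set) \<subseteq> cech_kernel n A (A \<union> B)"
  have A: "closed A" "A \<subseteq> X" "A \<noteq> {}" and \<alpha>A: "cech_incl n A X \<alpha> \<noteq> cech_zero n A"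
    and minimal: "\<And>C. closed C \<Longrightarrow> C \<subset> A \<Longrightarrow> cech_incl n C X \<alpha> = cech_zero n C"
    using assms(4) unfolding cech_carrier_def by auto
  define r where "r = (SOME r. r \<in> \<alpha>)"
  have r: "r \<in> \<alpha>" "cech_is_rep n X r" using H_some[OF assms(2)] H_rep[OF assms(2)] by (auto simp: r_def)
  show "A \<subseteq> B"
  proof (rule ccontr)
    assume "\<not> A \<subseteq> B"
    then have "cech_rel n (A \<inter> B) cech_zero_rep r"
      using minimal[of "A \<inter> B"] A assms(5) incl_zero_iff[OF assms(2) r(1)] by auto
    then obtain r0 where r0: "cech_is_rep n (A \<union> B) r0" "cech_rel n B cech_zero_rep r0"
        "cech_rel n A r0 r"
      using vanishing_extension[OF assms(1) A assms(5,6) r(2)] by blast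
    define c where "c = cech_class n (A \<union> B) r0"
    have c: "c \<in> cech_H n (A \<union> B)" "r0 \<in> c"
      using r0(1) in_own_class[OF r0(1)] unfolding c_def cech_H_def by auto
    then have "c \<in> cech_kernel n A (A \<union> B)"
      using K kernel_iff[OF c, of B] r0(2) by auto
    then have "cech_rel n A cech_zero_rep r0"
      using kernel_iff[OF c, of A] by simp
    then have "cech_rel n A cech_zero_rep r"
      using rel_trans rep_mono r0 by blast
    then show False
      using \<alpha>A incl_zero_iff[OF assms(2) r(1)] A(2) by blast
  qed
qed

end
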